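(* Let $G$ be a group of finite order $n$ whose Sylow $2$-subgroups are non-trivial and cyclic. Then the Cayley table of $G$ contains no $k$-plex for any odd $k$, but the Cayley table has a $2$-partition, and hence contains a $k$-plex for every even $k$ with $0\le k\le n$.
   Context: The Cayley table of a finite group $G$ is the latin square with rows and columns indexed by the elements of $G$ whose entry in row $x$, column $y$ is $xy$. A $k$-plex in a latin square of order $n$ is a set of $kn$ cells containing exactly $k$ cells from each row, exactly $k$ cells from each column, and exactly $k$ occurrences of each symbol. A $2$-partition of a latin square is a partition of its set of cells into pairwise disjoint $2$-plexes. *)

theory Defs
  imports "HOL-Algebra.Algebra" "HOL-Computational_Algebra.Primes"
begin

definition sylow_subgroup :: "('a, 'b) monoid_scheme \<Rightarrow> nat \<Rightarrow> 'a set \<Rightarrow> bool" where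
  "sylow_subgroup G p P \<longleftrightarrow> subgroup P G \<and> card P = p ^ multiplicity p (order G)"

text \<open>Cells of the Cayley table of G: pairs (row x, column y); the symbol of cell (x,y) is x*y.\<close>
definition cayley_cells :: "('a, 'b) monoid_scheme \<Rightarrow> ('a \<times> 'a) set" where
  "cayley_cells G = carrier G \<times> carrier G"

definition cayley_kplex :: "('a, 'b) monoid_scheme \<Rightarrow> nat \<Rightarrow> ('a \<times> 'a) set \<Rightarrow> bool" where
  "cayley_kplex G k P \<longleftrightarrow>
     P \<subseteq> cayley_cells G \<and> card P = k * order G \<and>
     (\<forall>x \<in> carrier G. card {c \<in> P. fst c = x} = k) \<and>
     (\<forall>y \<in> carrier G. card {c \<in> P. snd c = y} = k) \<and>
     (\<forall>s \<in> carrier G. card {c \<in> P. fst c \<otimes>\<^bsub>G\<^esub> snd c = s} = k)"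

definition cayley_2partition :: "('a, 'b) monoid_scheme \<Rightarrow> ('a \<times> 'a) set set \<Rightarrow> bool" where
  "cayley_2partition G Q \<longleftrightarrow>
     (\<forall>P \<in> Q. cayley_kplex G 2 P) \<and>
     (\<forall>P \<in> Q. \<forall>P' \<in> Q. P \<noteq> P' \<longrightarrow> P \<inter> P' = {}) \<and>
     \<Union>Q = cayley_cells G"

end

(*
  Let <g> be a cyclic Sylow 2-subgroup of G, of order m = 2^a, so that its index q = n/m is
  odd. The transfer of G into the abelian group <g>, evaluated at g through the cycles of g
  acting on the cosets of <g>, is an odd power of g: a cycle of length r contributes a conjugate
  of g^r lying in <g>, which is a power of g of the same parity as r, and the cycle lengths add
  up to the odd index q. Rescaling gives a homomorphism psi from G onto Z/m with psi g = 1,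
  whose kernel N has odd order q.

  Summing psi over the cells of a k-plex, the row values plus the column values agree with the
  symbol values modulo m, so m divides k S where 2 S = q m (m - 1); as q (m - 1) is odd, k is
  even. Conversely, write every x as g^(psi x) a_x with a_x in N. For c in N and d < m/2, the
  cells (x, a_x c g^(psi x + 2d + delta)) with delta in {0, 1} form a 2-plex: for fixed delta
  the column determines the row; the symbol determines delta by the parity of its psi value and,
  as squaring is injective on the odd-order group N, it determines the row once it is known in
  which half of Z/m the value psi x lies. These q m/2 2-plexes partition the table, and the
  union of j of them is a 2j-plex.
*)

theory Submission
  imports Defs "HOL-Combinatorics.Orbits"
begin

lemma (in group) inv_mult_cancel_left:
  "a \<in> carrier G \<Longrightarrow> z \<in> carrier G \<Longrightarrow> inv a \<otimes> (a \<otimes> z) = z"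
  by (simp flip: m_assoc)

lemma (in group) mult_inv_cancel_left:
  "a \<in> carrier G \<Longrightarrow> z \<in> carrier G \<Longrightarrow> a \<otimes> (inv a \<otimes> z) = z"
  by (simp flip: m_assoc)

section \<open>Plexes of Cayley tables\<close>

lemma card_eq_sum_card_fibres:
  assumes "finite P" "finite A" "h ` P \<subseteq> A"
  shows "card P = (\<Sum>x\<in>A. card {c\<in>P. h c = x})"
  using sum.group[OF assms, of "\<lambda>_. 1::nat"] by simp

lemma sum_comp_eq_if_card_fibres:
  assumes "finite P" "finite A" "h ` P \<subseteq> A" and fibres: "\<forall>x\<in>A. card {c\<in>P. h c = x} = k"
  shows "(\<Sum>c\<in>P. f (h c)) = k * (\<Sum>x\<in>A. f x)"
proof -
  have "(\<Sum>c\<in>P. f (h c)) = (\<Sum>x\<in>A. \<Sum>c\<in>{c\<in>P. h c = x}. f (h c))"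
    using sum.group[OF assms(1-3), of "\<lambda>c. f (h c)"] by simp
  also have "\<dots> = (\<Sum>x\<in>A. k * f x)"
    using fibres by (intro sum.cong) auto
  finally show ?thesis
    by (simp add: sum_distrib_left)
qed

lemma card_fibres_eq_if_le:
  assumes "finite P" "finite A" "h ` P \<subseteq> A" "card P = k * card A"
    and le: "\<forall>x\<in>A. card {c\<in>P. h c = x} \<le> k"
  shows "\<forall>x\<in>A. card {c\<in>P. h c = x} = k"
proof (rule ccontr)
  assume "\<not> ?thesis"
  then obtain x where "x \<in> A" "card {c\<in>P. h c = x} < k"
    using le le_neq_implies_less by blast
  then have "(\<Sum>x\<in>A. card {c\<in>P. h c = x}) < (\<Sum>x\<in>A. k)"
    using le assms(2) by (intro sum_strict_mono_ex1) auto
  then show False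
    using card_eq_sum_card_fibres[OF assms(1-3)] assms(4) by (simp add: mult.commute)
qed

lemma (in group) cayley_kplex_sums:
  assumes "cayley_kplex G k P" "finite (carrier G)"
  shows "(\<Sum>c\<in>P. f (fst c)) = k * (\<Sum>x\<in>carrier G. f x)"
    and "(\<Sum>c\<in>P. f (snd c)) = k * (\<Sum>x\<in>carrier G. f x)"
    and "(\<Sum>c\<in>P. f (fst c \<otimes>\<^bsub>G\<^esub> snd c)) = k * (\<Sum>x\<in>carrier G. f x)"
proof -
  have P: "P \<subseteq> carrier G \<times> carrier G"
    using assms(1) unfolding cayley_kplex_def cayley_cells_def by blast
  then have "finite P"
    using assms(2) finite_subset by blast
  then show "(\<Sum>c\<in>P. f (fst c)) = k * (\<Sum>x\<in>carrier G. f x)"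
    and "(\<Sum>c\<in>P. f (snd c)) = k * (\<Sum>x\<in>carrier G. f x)"
    and "(\<Sum>c\<in>P. f (fst c \<otimes>\<^bsub>G\<^esub> snd c)) = k * (\<Sum>x\<in>carrier G. f x)"
    using assms P
    by (auto intro!: sum_comp_eq_if_card_fibres simp: cayley_kplex_def)
qed

lemma cayley_kplex_Union:
  assumes "finite (carrier G)" "finite Q" and plexes: "\<forall>P\<in>Q. cayley_kplex G k P"
    and disj: "\<forall>P\<in>Q. \<forall>P'\<in>Q. P \<noteq> P' \<longrightarrow> P \<inter> P' = {}"
  shows "cayley_kplex G (k * card Q) (\<Union>Q)"
proof -
  have sub: "\<forall>P\<in>Q. P \<subseteq> cayley_cells G"
    using plexes unfolding cayley_kplex_def by blast
  then have fin: "\<forall>P\<in>Q. finite P"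
    using assms(1) finite_subset unfolding cayley_cells_def by blast
  have fibres: "\<forall>x\<in>carrier G. card {c \<in> \<Union>Q. h c = x} = k * card Q"
    if "\<forall>P\<in>Q. \<forall>x\<in>carrier G. card {c \<in> P. h c = x} = k" for h :: "'a \<times> 'a \<Rightarrow> 'a"
  proof
    fix x assume "x \<in> carrier G"
    have "{c \<in> \<Union>Q. h c = x} = (\<Union>P\<in>Q. {c \<in> P. h c = x})"
      by auto
    then show "card {c \<in> \<Union>Q. h c = x} = k * card Q"
      using fin disj assms(2) that \<open>x \<in> carrier G\<close> by (simp add: card_UN_disjoint Int_def)
  qed
  have "card (\<Union>Q) = (\<Sum>P\<in>Q. card P)"
    using fin disj by (intro card_Union_disjoint) (auto simp: pairwise_def disjnt_def)
  then have "card (\<Union>Q) = k * card Q * order G"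
    using plexes unfolding cayley_kplex_def by simp
  moreover have "\<Union>Q \<subseteq> cayley_cells G"
    using sub by blast
  moreover have "\<forall>x\<in>carrier G. card {c \<in> \<Union>Q. fst c = x} = k * card Q"
    by (rule fibres) (use plexes in \<open>simp add: cayley_kplex_def\<close>)
  moreover have "\<forall>y\<in>carrier G. card {c \<in> \<Union>Q. snd c = y} = k * card Q"
    by (rule fibres) (use plexes in \<open>simp add: cayley_kplex_def\<close>)
  moreover have "\<forall>s\<in>carrier G. card {c \<in> \<Union>Q. fst c \<otimes>\<^bsub>G\<^esub> snd c = s} = k * card Q"
    by (rule fibres) (use plexes in \<open>simp add: cayley_kplex_def\<close>)
  ultimately show ?thesis
    unfolding cayley_kplex_def by blast
qed

lemma order_eq_twice_card_if_cayley_2partition: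
  assumes "cayley_2partition G Q" "finite (carrier G)" "carrier G \<noteq> {}"
  shows "finite Q" "order G = 2 * card Q"
proof -
  have plexes: "\<forall>P\<in>Q. cayley_kplex G 2 P" and disj: "\<forall>P\<in>Q. \<forall>P'\<in>Q. P \<noteq> P' \<longrightarrow> P \<inter> P' = {}"
    and cells: "\<Union>Q = cayley_cells G"
    using assms(1) unfolding cayley_2partition_def by auto
  have fin_cells: "finite (cayley_cells G)"
    using assms(2) unfolding cayley_cells_def by simp
  then show "finite Q"
    using cells by (metis finite_UnionD)
  then have "cayley_kplex G (2 * card Q) (cayley_cells G)"
    using cayley_kplex_Union[OF assms(2) _ plexes disj] cells by simp
  then have "order G * order G = 2 * card Q * order G"
    unfolding cayley_kplex_def cayley_cells_def order_def by (simp add: card_cartesian_product)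
  moreover have "0 < order G"
    using assms(2,3) unfolding order_def by (simp add: card_gt_0_iff)
  ultimately show "order G = 2 * card Q"
    by simp
qed

lemma cayley_kplex_if_2partition:
  assumes "cayley_2partition G Q" "finite (carrier G)" "carrier G \<noteq> {}"
    and "even k" "k \<le> order G"
  shows "\<exists>P. cayley_kplex G k P"
proof -
  obtain j where j: "k = 2 * j"
    using assms(4) by blast
  have "j \<le> card Q"
    using j assms(5) order_eq_twice_card_if_cayley_2partition[OF assms(1-3)] by simp
  then obtain Q' where Q': "Q' \<subseteq> Q" "card Q' = j" "finite Q'"
    by (metis obtain_subset_with_card_n)
  moreover have "\<forall>P\<in>Q'. cayley_kplex G 2 P" "\<forall>P\<in>Q'. \<forall>P'\<in>Q'. P \<noteq> P' \<longrightarrow> P \<inter> P' = {}"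
    using assms(1) Q'(1) unfolding cayley_2partition_def by (meson subsetD)+
  ultimately have "cayley_kplex G (2 * card Q') (\<Union>Q')"
    using cayley_kplex_Union[OF assms(2)] by blast
  then show ?thesis
    using j Q'(2) by blast
qed

section \<open>Groups with a cyclic quotient of even order and odd kernel\<close>

lemma add_mod_eq_left_iff:
  fixes a b m :: nat
  assumes "a < m" "b < m"
  shows "(a + b) mod m = a \<longleftrightarrow> b = 0"
  using assms by (cases "a + b < m") (auto simp: mod_if)

lemma mod_add_right_cancel_nat:
  fixes a b k m :: nat
  shows "(a + k) mod m = (b + k) mod m \<longleftrightarrow> a mod m = b mod m"
  by (simp add: nat_mod_eq_iff)

lemma double_mod_eq_imp_eq:
  fixes i j m :: nat
  assumes "even m" "i < m" "j < m" "(2 * i) mod m = (2 * j) mod m"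
    and "i < m div 2 \<longleftrightarrow> j < m div 2"
  shows "i = j"
proof (cases "i < m div 2")
  case True
  then have "2 * i < m" "2 * j < m"
    using assms by auto
  then show ?thesis
    using assms(4) by simp
next
  case False
  then have "m \<le> 2 * i" "m \<le> 2 * j" "2 * i - m < m" "2 * j - m < m"
    using assms by auto
  then show ?thesis
    using assms(4) by (simp add: le_mod_geq)
qed

locale cyclic_quotient = group G for G (structure) +
  fixes \<psi> :: "'a \<Rightarrow> nat" and m q :: nat and g :: 'a
  assumes finite_carrier: "finite (carrier G)"
    and psi_less: "\<And>x. x \<in> carrier G \<Longrightarrow> \<psi> x < m"
    and psi_mult: "\<And>x y. x \<in> carrier G \<Longrightarrow> y \<in> carrier G \<Longrightarrow> \<psi> (x \<otimes> y) = (\<psi> x + \<psi> y) mod m"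
    and g_closed: "g \<in> carrier G" and psi_g: "\<psi> g = 1"
    and even_m: "even m" and order_eq: "order G = m * q" and odd_q: "odd q"
begin

lemma m_gt_1: "1 < m"
  using psi_less[OF g_closed] psi_g by simp

lemma psi_one: "\<psi> \<one> = 0"
  using psi_mult[of \<one> \<one>] psi_less[of \<one>] add_mod_eq_left_iff[of "\<psi> \<one>" m "\<psi> \<one>"] by simp

lemma psi_pow: "\<psi> (g [^] (i::nat)) = i mod m"
  by (induction i) (simp_all add: psi_one psi_mult g_closed psi_g mod_Suc_eq)

definition N :: "'a set" where
  "N = {x \<in> carrier G. \<psi> x = 0}"

lemma N_closed: "a \<in> N \<Longrightarrow> a \<in> carrier G"
  by (simp add: N_def)

lemma psi_mult_N_left: "a \<in> N \<Longrightarrow> y \<in> carrier G \<Longrightarrow> \<psi> (a \<otimes> y) = \<psi> y"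
  unfolding N_def using psi_mult psi_less by simp

lemma psi_eq_iff:
  assumes "x \<in> carrier G" "y \<in> carrier G"
  shows "\<psi> x = \<psi> y \<longleftrightarrow> x \<otimes> inv y \<in> N"
proof -
  have "\<psi> x = (\<psi> y + \<psi> (x \<otimes> inv y)) mod m"
    using psi_mult[of "x \<otimes> inv y" y] assms by (simp add: m_assoc add.commute)
  then show ?thesis
    unfolding N_def using add_mod_eq_left_iff psi_less assms by auto
qed

lemma subgroup_N: "subgroup N G"
proof
  show "N \<subseteq> carrier G"
    by (auto simp: N_def)
  show "\<one> \<in> N"
    by (simp add: N_def psi_one)
  show "x \<otimes> y \<in> N" if "x \<in> N" "y \<in> N" for x y
    using that by (simp add: N_def psi_mult)
  show "inv x \<in> N" if "x \<in> N" for x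
    using that psi_eq_iff[of \<one> x] by (simp add: N_def psi_one)
qed

lemma fibre_eq_rcoset:
  assumes "i < m"
  shows "{x \<in> carrier G. \<psi> x = i} = N #> g [^] i"
proof -
  have psi_i: "\<psi> (g [^] i) = i"
    using assms by (simp add: psi_pow)
  have "x \<in> N #> g [^] i \<longleftrightarrow> x \<in> carrier G \<and> \<psi> x = i" for x
  proof (cases "x \<in> carrier G")
    case True
    then show ?thesis
      using subgroup.rcos_module[OF subgroup_N is_group, of "g [^] i" x] psi_eq_iff[OF True, of "g [^] i"]
        psi_i g_closed by simp
  next
    case False
    then show ?thesis
      using r_coset_subset_G[OF subgroup.subset[OF subgroup_N]] g_closed by blast
  qed
  then show ?thesis
    by blast
qed

lemma card_fibre:
  assumes "i < m"
  shows "card {x \<in> carrier G. \<psi> x = i} = card N"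
proof -
  have "{x \<in> carrier G. \<psi> x = i} \<in> rcosets N"
    using fibre_eq_rcoset[OF assms] subgroup.subset[OF subgroup_N] g_closed by (simp add: rcosetsI)
  then show ?thesis
    using card_rcosets_equal subgroup.subset[OF subgroup_N] by metis
qed

lemma card_N: "card N = q"
proof -
  have "order G = (\<Sum>i<m. card {x \<in> carrier G. \<psi> x = i})"
    unfolding order_def using finite_carrier psi_less by (intro card_eq_sum_card_fibres) auto
  also have "\<dots> = m * card N"
    by (simp add: card_fibre)
  finally show ?thesis
    using order_eq m_gt_1 by simp
qed

lemma pow_card_N: "a \<in> N \<Longrightarrow> a [^] q = \<one>"
proof -
  assume a: "a \<in> N"
  interpret N_group: group "subgroup_generated G N"
    by (rule group_subgroup_generated)
  have carrier_N: "carrier (subgroup_generated G N) = N"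
    by (rule subgroup.carrier_subgroup_generated_subgroup[OF subgroup_N])
  have "a [^]\<^bsub>subgroup_generated G N\<^esub> order (subgroup_generated G N) = \<one>\<^bsub>subgroup_generated G N\<^esub>"
    using N_group.pow_order_eq_1 a carrier_N by simp
  then show ?thesis
    using card_N carrier_N unfolding order_def by (simp add: pow_subgroup_generated)
qed

lemma square_inj_N:
  assumes "a \<in> N" "b \<in> N" "a \<otimes> a = b \<otimes> b"
  shows "a = b"
proof -
  obtain h where h: "q + 1 = 2 * h"
    using odd_q by (metis odd_Suc_div_two Suc_eq_plus1 mult_2 add.commute dvd_def oddE add_Suc_right)
  have sq: "x = (x \<otimes> x) [^] h" if "x \<in> N" for x
  proof -
    have "x = x [^] q \<otimes> x"
      using that pow_card_N N_closed by simp
    also have "\<dots> = x [^] (2 * h)"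
      using h by (metis Suc_eq_plus1 nat_pow_Suc)
    also have "\<dots> = (x [^] (2::nat)) [^] h"
      using that N_closed by (simp add: nat_pow_pow)
    also have "x [^] (2::nat) = x \<otimes> x"
      using that N_closed by (metis Suc_1 nat_pow_Suc2 nat_pow_eone)
    finally show ?thesis .
  qed
  show ?thesis
    using sq[OF assms(1)] sq[OF assms(2)] assms(3) by simp
qed

definition kernel_part :: "'a \<Rightarrow> 'a" where
  "kernel_part x = inv (g [^] \<psi> x) \<otimes> x"

lemma kernel_part:
  assumes "x \<in> carrier G"
  shows "kernel_part x \<in> N" "g [^] \<psi> x \<otimes> kernel_part x = x"
proof -
  show eq: "g [^] \<psi> x \<otimes> kernel_part x = x"
    using assms g_closed by (simp add: kernel_part_def flip: m_assoc)
  have "kernel_part x \<in> carrier G"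
    using assms g_closed by (simp add: kernel_part_def)
  then have "(\<psi> x + \<psi> (kernel_part x)) mod m = \<psi> x"
    using psi_mult[of "g [^] \<psi> x" "kernel_part x"] eq g_closed psi_pow psi_less assms by simp
  then show "kernel_part x \<in> N"
    using add_mod_eq_left_iff psi_less assms \<open>kernel_part x \<in> carrier G\<close> by (simp add: N_def)
qed

(* kernel_part x is the a_x of x = g^(psi x) a_x; delta selects one of the two cells in row x. *)
definition twoplex_col :: "'a \<Rightarrow> nat \<Rightarrow> 'a \<Rightarrow> nat \<Rightarrow> 'a" where
  "twoplex_col c d x \<delta> = kernel_part x \<otimes> c \<otimes> g [^] (\<psi> x + 2 * d + \<delta>)"

definition twoplex_cell :: "'a \<Rightarrow> nat \<Rightarrow> 'a \<times> nat \<Rightarrow> 'a \<times> 'a" where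
  "twoplex_cell c d = (\<lambda>(x, \<delta>). (x, twoplex_col c d x \<delta>))"

definition twoplex :: "'a \<Rightarrow> nat \<Rightarrow> ('a \<times> 'a) set" where
  "twoplex c d = twoplex_cell c d ` (carrier G \<times> {0, 1})"

lemma twoplex_col_closed: "c \<in> N \<Longrightarrow> x \<in> carrier G \<Longrightarrow> twoplex_col c d x \<delta> \<in> carrier G"
  using kernel_part N_closed g_closed by (simp add: twoplex_col_def)

lemma psi_twoplex_col:
  assumes "c \<in> N" "x \<in> carrier G"
  shows "\<psi> (twoplex_col c d x \<delta>) = (\<psi> x + 2 * d + \<delta>) mod m"
proof -
  have "kernel_part x \<otimes> c \<in> N"
    using assms kernel_part(1) subgroup.m_closed[OF subgroup_N] by blast
  then show ?thesis
    using psi_mult_N_left g_closed by (simp add: twoplex_col_def psi_pow)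
qed

lemma twoplex_symbol:
  assumes "c \<in> N" "x \<in> carrier G"
  shows "x \<otimes> twoplex_col c d x \<delta>
    = g [^] \<psi> x \<otimes> (kernel_part x \<otimes> kernel_part x) \<otimes> (c \<otimes> g [^] (\<psi> x + 2 * d + \<delta>))"
proof -
  have "x \<otimes> twoplex_col c d x \<delta>
      = (g [^] \<psi> x \<otimes> kernel_part x) \<otimes> (kernel_part x \<otimes> c \<otimes> g [^] (\<psi> x + 2 * d + \<delta>))"
    using kernel_part(2)[OF assms(2)] by (simp add: twoplex_col_def)
  then show ?thesis
    using kernel_part(1)[OF assms(2)] assms N_closed g_closed by (simp add: m_assoc)
qed

lemma psi_twoplex_symbol:
  assumes "c \<in> N" "x \<in> carrier G"
  shows "\<psi> (x \<otimes> twoplex_col c d x \<delta>) = (2 * \<psi> x + (2 * d + \<delta>)) mod m"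
  using assms psi_mult[OF assms(2) twoplex_col_closed[OF assms]] psi_twoplex_col
  by (simp add: mod_add_right_eq add.assoc mult_2)

lemma eq_if_kernel_part_eq:
  assumes "x \<in> carrier G" "x' \<in> carrier G" "\<psi> x = \<psi> x'" "kernel_part x = kernel_part x'"
  shows "x = x'"
  using kernel_part(2) assms by metis

lemma twoplex_col_inj:
  assumes "c \<in> N" "x \<in> carrier G" "x' \<in> carrier G"
    and eq: "twoplex_col c d x \<delta> = twoplex_col c d x' \<delta>"
  shows "x = x'"
proof -
  have "(\<psi> x + (2 * d + \<delta>)) mod m = (\<psi> x' + (2 * d + \<delta>)) mod m"
    using arg_cong[OF eq, of \<psi>] assms(1-3) by (simp add: psi_twoplex_col add.assoc)
  then have psi_eq: "\<psi> x = \<psi> x'"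
    using psi_less assms(2,3) by (simp add: mod_add_right_cancel_nat)
  then have "kernel_part x \<otimes> c = kernel_part x' \<otimes> c"
    using eq assms g_closed kernel_part(1) N_closed by (simp add: twoplex_col_def)
  then show ?thesis
    using psi_eq assms kernel_part(1) N_closed eq_if_kernel_part_eq by simp
qed

lemma twoplex_symbol_inj:
  assumes "c \<in> N" "x \<in> carrier G" "x' \<in> carrier G" "\<delta> \<in> {0, 1}" "\<delta>' \<in> {0, 1}"
    and eq: "x \<otimes> twoplex_col c d x \<delta> = x' \<otimes> twoplex_col c d x' \<delta>'"
    and half: "\<psi> x < m div 2 \<longleftrightarrow> \<psi> x' < m div 2"
  shows "x = x'" "\<delta> = \<delta>'"
proof -
  have psi_eq: "(2 * \<psi> x + (2 * d + \<delta>)) mod m = (2 * \<psi> x' + (2 * d + \<delta>')) mod m"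
    using psi_twoplex_symbol[OF assms(1,2)] psi_twoplex_symbol[OF assms(1,3)] eq by metis
  moreover have "even (k mod m) = even k" for k
    using even_m by (simp add: dvd_mod_iff)
  ultimately have "even (2 * \<psi> x + (2 * d + \<delta>)) = even (2 * \<psi> x' + (2 * d + \<delta>'))"
    by metis
  then have "even \<delta> = even \<delta>'"
    by simp
  then show delta: "\<delta> = \<delta>'"
    using assms(4,5) by auto
  then have "(2 * \<psi> x) mod m = (2 * \<psi> x') mod m"
    using psi_eq by (simp add: mod_add_right_cancel_nat)
  then have psi_x: "\<psi> x = \<psi> x'"
    using double_mod_eq_imp_eq even_m psi_less assms(2,3) half by blast
  have "kernel_part x \<otimes> kernel_part x = kernel_part x' \<otimes> kernel_part x'"
    using eq twoplex_symbol[OF assms(1,2)] twoplex_symbol[OF assms(1,3)] delta psi_x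
      kernel_part(1) assms(1-3) N_closed g_closed
    by simp
  then show "x = x'"
    using square_inj_N kernel_part(1) assms(2,3) psi_x eq_if_kernel_part_eq by blast
qed

lemma inj_on_twoplex_cell:
  assumes "c \<in> N"
  shows "inj_on (twoplex_cell c d) (carrier G \<times> {0, 1})"
proof (rule inj_onI, clarify)
  fix x \<delta> x' \<delta>'
  assume "x \<in> carrier G" "\<delta> \<in> {0, 1}" "\<delta>' \<in> {0, 1::nat}"
    and eq: "twoplex_cell c d (x, \<delta>) = twoplex_cell c d (x', \<delta>')"
  then have "x' = x" "(\<psi> x + 2 * d + \<delta>) mod m = (\<psi> x + 2 * d + \<delta>') mod m"
    using arg_cong[OF eq, of "\<lambda>e. \<psi> (snd e)"] assms
    by (simp_all add: twoplex_cell_def psi_twoplex_col)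
  then show "x = x' \<and> \<delta> = \<delta>'"
    using m_gt_1 \<open>\<delta> \<in> {0, 1}\<close> \<open>\<delta>' \<in> {0, 1}\<close>
    by (auto simp: add.commute[of _ \<delta>] add.commute[of _ \<delta>'] mod_add_right_cancel_nat)
qed

lemma card_twoplex_fibre:
  assumes "c \<in> N"
  shows "card {e \<in> twoplex c d. h e = y}
    = card {p \<in> carrier G \<times> {0, 1}. h (twoplex_cell c d p) = y}"
proof -
  have "{e \<in> twoplex c d. h e = y}
      = twoplex_cell c d ` {p \<in> carrier G \<times> {0, 1}. h (twoplex_cell c d p) = y}"
    unfolding twoplex_def by blast
  moreover have "inj_on (twoplex_cell c d) {p \<in> carrier G \<times> {0, 1}. h (twoplex_cell c d p) = y}"
    by (rule inj_on_subset[OF inj_on_twoplex_cell[OF assms]]) blast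
  ultimately show ?thesis
    by (simp add: card_image)
qed

lemma card_twoplex_row:
  assumes "c \<in> N" "x \<in> carrier G"
  shows "card {e \<in> twoplex c d. fst e = x} = 2"
proof -
  have "{p \<in> carrier G \<times> {0, 1}. fst (twoplex_cell c d p) = x} = {x} \<times> {0, 1::nat}"
    using assms(2) by (auto simp: twoplex_cell_def)
  then show ?thesis
    by (simp add: card_twoplex_fibre[OF assms(1)])
qed

lemma card_twoplex_column_le:
  assumes "c \<in> N"
  shows "card {e \<in> twoplex c d. snd e = y} \<le> 2"
proof -
  have "inj_on snd {p \<in> carrier G \<times> {0, 1}. snd (twoplex_cell c d p) = y}"
    using twoplex_col_inj[OF assms] by (auto simp: inj_on_def twoplex_cell_def)
  then have "card {p \<in> carrier G \<times> {0, 1}. snd (twoplex_cell c d p) = y} \<le> card {0, 1::nat}"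
    by (rule card_inj_on_le) auto
  then show ?thesis
    by (simp add: card_twoplex_fibre[OF assms])
qed

lemma card_twoplex_symbol_le:
  assumes "c \<in> N"
  shows "card {e \<in> twoplex c d. fst e \<otimes> snd e = s} \<le> 2"
proof -
  define S where "S = {p \<in> carrier G \<times> {0, 1}. fst (twoplex_cell c d p) \<otimes> snd (twoplex_cell c d p) = s}"
  have "inj_on (\<lambda>p. \<psi> (fst p) < m div 2) S"
  proof (rule inj_onI)
    fix p p'
    assume "p \<in> S" "p' \<in> S" "(\<psi> (fst p) < m div 2) = (\<psi> (fst p') < m div 2)"
    moreover obtain x \<delta> x' \<delta>' where "p = (x, \<delta>)" "p' = (x', \<delta>')"
      by fastforce
    ultimately show "p = p'"
      using twoplex_symbol_inj[OF assms, of x x' \<delta> \<delta>' d] by (auto simp: S_def twoplex_cell_def)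
  qed
  then have "card S \<le> card (UNIV :: bool set)"
    by (rule card_inj_on_le) auto
  then show ?thesis
    by (simp add: card_twoplex_fibre[OF assms] S_def)
qed

lemma twoplex_kplex:
  assumes "c \<in> N"
  shows "cayley_kplex G 2 (twoplex c d)"
proof -
  have fin: "finite (twoplex c d)"
    using finite_carrier unfolding twoplex_def by simp
  have sub: "twoplex c d \<subseteq> carrier G \<times> carrier G"
    using assms twoplex_col_closed unfolding twoplex_def twoplex_cell_def by auto
  have card: "card (twoplex c d) = 2 * card (carrier G)"
    using inj_on_twoplex_cell[OF assms] unfolding twoplex_def
    by (simp add: card_image card_cartesian_product)
  have "\<forall>y\<in>carrier G. card {e \<in> twoplex c d. snd e = y} = 2"
    using sub card_twoplex_column_le[OF assms]
    by (intro card_fibres_eq_if_le[OF fin finite_carrier _ card]) auto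
  moreover have "\<forall>s\<in>carrier G. card {e \<in> twoplex c d. fst e \<otimes> snd e = s} = 2"
    using sub card_twoplex_symbol_le[OF assms]
    by (intro card_fibres_eq_if_le[OF fin finite_carrier _ card]) auto
  ultimately show ?thesis
    using sub card card_twoplex_row[OF assms]
    unfolding cayley_kplex_def cayley_cells_def order_def by blast
qed

lemma twoplex_unique:
  assumes "c \<in> N" "c' \<in> N" "d < m div 2" "d' < m div 2"
    and "e \<in> twoplex c d" "e \<in> twoplex c' d'"
  shows "c = c'" "d = d'"
proof -
  obtain x \<delta> \<delta>' where x: "x \<in> carrier G" "\<delta> \<in> {0, 1::nat}" "\<delta>' \<in> {0, 1::nat}"
    and col: "twoplex_col c d x \<delta> = twoplex_col c' d' x \<delta>'"
    using assms(5,6) unfolding twoplex_def twoplex_cell_def by auto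
  have "((2 * d + \<delta>) + \<psi> x) mod m = ((2 * d' + \<delta>') + \<psi> x) mod m"
    using arg_cong[OF col, of \<psi>] assms(1,2) x(1) by (simp add: psi_twoplex_col ac_simps)
  moreover have "2 * d + \<delta> < m" "2 * d' + \<delta>' < m"
    using assms(3,4) x(2,3) even_m by auto
  ultimately have "2 * d + \<delta> = 2 * d' + \<delta>'"
    by (simp add: mod_add_right_cancel_nat)
  moreover have "\<delta> < 2" "\<delta>' < 2"
    using x(2,3) by auto
  ultimately have "d = d'" "\<delta> = \<delta>'"
    by presburger+
  then show "d = d'"
    by simp
  have "kernel_part x \<otimes> c = kernel_part x \<otimes> c'"
    using col \<open>\<delta> = \<delta>'\<close> \<open>d = d'\<close> assms(1,2) x(1) kernel_part(1) N_closed g_closed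
    by (simp add: twoplex_col_def)
  then show "c = c'"
    using assms(1,2) x(1) kernel_part(1) N_closed by simp
qed

lemma cell_in_twoplex:
  assumes "x \<in> carrier G" "y \<in> carrier G"
  shows "\<exists>c\<in>N. \<exists>d<m div 2. (x, y) \<in> twoplex c d"
proof -
  define j where "j = \<psi> (inv x \<otimes> y)"
  define h where "h = g [^] (\<psi> x + j)"
  define c where "c = inv (kernel_part x) \<otimes> y \<otimes> inv h"
  have closed: "kernel_part x \<in> carrier G" "h \<in> carrier G"
    using kernel_part(1)[OF assms(1)] N_closed g_closed by (auto simp: h_def)
  have "j < m"
    using assms psi_less by (simp add: j_def)
  have "\<psi> y = (\<psi> x + j) mod m"
    using psi_mult[of x "inv x \<otimes> y"] assms by (simp add: j_def flip: m_assoc)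
  also have "\<dots> = \<psi> h"
    by (simp add: h_def psi_pow)
  also have "\<psi> y = \<psi> (inv (kernel_part x) \<otimes> y)"
    using psi_mult_N_left kernel_part(1) subgroup.m_inv_closed[OF subgroup_N] assms by simp
  finally have "c \<in> N"
    using psi_eq_iff closed assms(2) by (simp add: c_def)
  moreover have "j div 2 < m div 2"
    using \<open>j < m\<close> even_m by (auto elim!: evenE)
  moreover have "twoplex_col c (j div 2) x (j mod 2) = kernel_part x \<otimes> c \<otimes> h"
    by (simp add: twoplex_col_def h_def add.commute)
  moreover have "kernel_part x \<otimes> c \<otimes> h = y"
    using closed assms(2) by (simp add: c_def m_assoc mult_inv_cancel_left)
  ultimately have "(x, y) = twoplex_cell c (j div 2) (x, j mod 2)"
    by (simp add: twoplex_cell_def)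
  moreover have "(x, j mod 2) \<in> carrier G \<times> {0, 1}"
    using assms(1) by auto
  ultimately have "(x, y) \<in> twoplex c (j div 2)"
    unfolding twoplex_def by (rule image_eqI)
  then show ?thesis
    using \<open>c \<in> N\<close> \<open>j div 2 < m div 2\<close> by blast
qed

definition twoplexes :: "('a \<times> 'a) set set" where
  "twoplexes = (\<lambda>(c, d). twoplex c d) ` (N \<times> {..<m div 2})"

lemma cayley_2partition_twoplexes: "cayley_2partition G twoplexes"
  unfolding cayley_2partition_def
proof (intro conjI ballI impI)
  show "cayley_kplex G 2 P" if "P \<in> twoplexes" for P
    using that twoplex_kplex unfolding twoplexes_def by auto
  show "P \<inter> P' = {}" if P: "P \<in> twoplexes" "P' \<in> twoplexes" and "P \<noteq> P'" for P P'
  proof -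
    obtain c d c' d' where "c \<in> N" "d < m div 2" "P = twoplex c d"
      and "c' \<in> N" "d' < m div 2" "P' = twoplex c' d'"
      using P unfolding twoplexes_def by auto
    then show ?thesis
      using \<open>P \<noteq> P'\<close> twoplex_unique by blast
  qed
  show "\<Union>twoplexes = cayley_cells G"
  proof
    show "\<Union>twoplexes \<subseteq> cayley_cells G"
      using twoplex_col_closed
      unfolding twoplexes_def twoplex_def twoplex_cell_def cayley_cells_def by auto
    show "cayley_cells G \<subseteq> \<Union>twoplexes"
      using cell_in_twoplex unfolding twoplexes_def cayley_cells_def by fastforce
  qed
qed

lemma sum_psi: "2 * (\<Sum>x\<in>carrier G. \<psi> x) = q * (m * (m - 1))"
proof -
  have "(\<Sum>x\<in>carrier G. \<psi> x) = q * (\<Sum>i<m. i)"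
    using finite_carrier psi_less card_fibre card_N
    by (intro sum_comp_eq_if_card_fibres[where f = id, simplified]) auto
  moreover have "2 * (\<Sum>i<m. i) = m * (m - 1)"
    using Sum_Ico_nat[of 0 m] even_m by (simp add: lessThan_atLeast0)
  ultimately show ?thesis
    by simp
qed

lemma even_if_cayley_kplex:
  assumes "cayley_kplex G k P"
  shows "even k"
proof -
  define S where "S = (\<Sum>x\<in>carrier G. \<psi> x)"
  have P: "P \<subseteq> carrier G \<times> carrier G"
    using assms unfolding cayley_kplex_def cayley_cells_def by blast
  have "(k * S) mod m = (\<Sum>c\<in>P. \<psi> (fst c \<otimes> snd c)) mod m"
    using cayley_kplex_sums(3)[OF assms finite_carrier] by (simp add: S_def)
  also have "\<dots> = (\<Sum>c\<in>P. \<psi> (fst c) + \<psi> (snd c)) mod m"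
    using P psi_mult
    by (subst mod_sum_eq[symmetric]) (auto intro!: arg_cong[where f="\<lambda>z. z mod m"] sum.cong)
  also have "\<dots> = (k * S mod m + k * S) mod m"
    using cayley_kplex_sums(1,2)[OF assms finite_carrier]
    by (simp add: S_def sum.distrib mod_add_left_eq)
  finally have "k * S mod m = (k * S mod m + k * S mod m) mod m"
    by (simp add: mod_add_right_eq)
  then have "k * S mod m = 0"
    using add_mod_eq_left_iff[of "k * S mod m" m "k * S mod m"] m_gt_1 by simp
  then obtain t where t: "k * S = m * t"
    by (auto elim: dvdE)
  have "m * (k * q * (m - 1)) = m * (2 * t)"
    using sum_psi arg_cong[OF t, of "\<lambda>z. 2 * z"] by (simp add: S_def ac_simps)
  then have "even (k * q * (m - 1))"
    using m_gt_1 by simp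
  then show ?thesis
    using odd_q even_m m_gt_1 by auto
qed

end

section \<open>The transfer into a cyclic subgroup\<close>

lemma self_in_orbit_if_bij_betw:
  assumes "finite T" "bij_betw f T T" "x \<in> T"
  shows "x \<in> orbit f x"
proof -
  define \<sigma> where "\<sigma> y = (if y \<in> T then f y else y)" for y
  have "bij_betw \<sigma> T T"
    using assms(2) by (simp add: \<sigma>_def cong: bij_betw_cong)
  then have "\<sigma> permutes T"
    by (rule bij_imp_permutes) (simp add: \<sigma>_def)
  then have "x \<in> orbit \<sigma> x"
    using assms(1) by (intro permutation_self_in_orbit) (auto simp: permutation_permutes)
  moreover have "orbit \<sigma> x = orbit f x"
    using assms(2,3) by (intro orbit_cong0[of x T]) (auto simp: \<sigma>_def bij_betw_def)
  ultimately show ?thesis by simp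
qed

lemma orbit_subset_if_bij_betw:
  assumes "bij_betw f T T" "x \<in> T"
  shows "orbit f x \<subseteq> T"
proof
  fix y assume "y \<in> orbit f x"
  then show "y \<in> T"
    by induction (use assms in \<open>auto simp: bij_betw_def\<close>)
qed

lemma even_sum_eq_even_card_by_cycles:
  fixes w :: "'a \<Rightarrow> nat"
  assumes fin: "finite T" and bij: "bij_betw f T T"
    and cycle: "\<And>x n. x \<in> T \<Longrightarrow> 0 < n \<Longrightarrow> (f ^^ n) x = x \<Longrightarrow>
      even (\<Sum>k<n. w ((f ^^ k) x)) = even n"
  shows "even (\<Sum>x\<in>T. w x) = even (card T)"
proof -
  have self: "x \<in> orbit f x" if "x \<in> T" for x
    using self_in_orbit_if_bij_betw[OF fin bij that] .
  have sub: "orbit f x \<subseteq> T" if "x \<in> T" for x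
    using orbit_subset_if_bij_betw[OF bij that] .
  define Orb where "Orb = orbit f ` T"
  have T_eq: "T = \<Union>Orb"
    using self sub unfolding Orb_def by blast
  have fin_Orb: "finite Orb" "\<forall>B\<in>Orb. finite B"
    using fin unfolding Orb_def by (auto intro: finite_subset[OF sub fin])
  have orbit_eq: "orbit f z = orbit f x" if "x \<in> T" "z \<in> orbit f x" for x z
    using self that by (metis cyclic_on_singleI orbit_cyclic_eq3)
  have disj: "\<forall>B\<in>Orb. \<forall>B'\<in>Orb. B \<noteq> B' \<longrightarrow> B \<inter> B' = {}"
    unfolding Orb_def using orbit_eq by blast
  have orbit_parity: "even (sum w B) = even (card B)" if B: "B \<in> Orb" for B
  proof -
    obtain x where x: "x \<in> T" "B = orbit f x"
      using B unfolding Orb_def by blast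
    define n where "n = funpow_dist1 f x x"
    have B_eq: "B = (\<lambda>k. (f ^^ k) x) ` {..<n}"
      using orbit_conv_funpow_dist1[OF self[OF x(1)]] x(2) n_def by (simp add: atLeast0LessThan)
    have inj: "inj_on (\<lambda>k. (f ^^ k) x) {..<n}"
      using inj_on_funpow_dist1[OF self[OF x(1)]] n_def by (simp add: atLeast0LessThan)
    have "sum w B = (\<Sum>k<n. w ((f ^^ k) x))" and "card B = n"
      using B_eq inj by (simp_all add: sum.reindex card_image)
    moreover have "(f ^^ n) x = x"
      using funpow_dist1_prop[OF self[OF x(1)]] n_def by simp
    moreover have "0 < n"
      by (simp add: n_def)
    ultimately show ?thesis
      using cycle[OF x(1)] by simp
  qed
  have "even (\<Sum>x\<in>T. w x) = even (\<Sum>B\<in>Orb. sum w B)"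
    using sum.Union_disjoint[OF fin_Orb(2) disj, of w] T_eq by simp
  also have "\<dots> = even (\<Sum>B\<in>Orb. card B)"
    using orbit_parity fin_Orb(1) by (simp add: even_sum_iff cong: conj_cong)
  also have "\<dots> = even (card T)"
    using card_Union_disjoint[of Orb] fin_Orb(2) disj T_eq
    by (simp add: pairwise_def disjnt_def)
  finally show ?thesis .
qed

lemma (in group) conj_pow:
  assumes "t \<in> carrier G" "x \<in> carrier G"
  shows "(t \<otimes> x \<otimes> inv t) [^] (n::nat) = t \<otimes> x [^] n \<otimes> inv t"
proof (induction n)
  case (Suc n)
  have "t \<otimes> x [^] n \<otimes> inv t \<otimes> (t \<otimes> x \<otimes> inv t) = t \<otimes> (x [^] n \<otimes> x) \<otimes> inv t"
    using assms by (simp add: m_assoc inv_mult_cancel_left)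
  then show ?case
    using Suc by simp
qed (use assms in simp)

lemma (in group) ord_conj:
  assumes "t \<in> carrier G" "x \<in> carrier G"
  shows "ord (t \<otimes> x \<otimes> inv t) = ord x"
proof -
  have "t \<otimes> y \<otimes> inv t = \<one> \<longleftrightarrow> y = \<one>" if "y \<in> carrier G" for y
    using assms that by (metis inv_solve_right m_closed one_closed l_cancel_one l_one)
  then show ?thesis
    using assms by (simp add: ord_unique conj_pow pow_eq_id)
qed

lemma (in group) ord_pow_eq_div_gcd:
  assumes "finite (carrier G)" "g \<in> carrier G"
  shows "ord (g [^] (k::nat)) = ord g div gcd (ord g) k"
  using assms ord_ge_1[OF assms] by (simp add: ord_pow_gen)

lemma (in group) even_exponent_of_conjugate_power:
  assumes "finite (carrier G)" "g \<in> carrier G" "even (ord g)" "t \<in> carrier G"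
    and conj: "t \<otimes> g [^] (r::nat) \<otimes> inv t = g [^] (s::nat)"
  shows "even s = even r"
proof -
  have "ord (g [^] s) = ord (g [^] r)"
    using assms ord_conj by (metis nat_pow_closed)
  then have "ord g div gcd (ord g) s = ord g div gcd (ord g) r"
    using assms(1,2) by (simp add: ord_pow_eq_div_gcd)
  moreover have "0 < ord g"
    using ord_ge_1[OF assms(1,2)] by simp
  ultimately have "gcd (ord g) s = gcd (ord g) r"
    using dvd_div_eq_2 gcd_dvd1 by blast
  moreover have "even k \<longleftrightarrow> 2 dvd gcd (ord g) k" for k
    using assms(3) by (simp add: gcd_greatest_iff)
  ultimately show ?thesis
    by (metis (no_types))
qed

locale cyclic_transfer = group G for G (structure) +
  fixes g
  assumes finite_carrier: "finite (carrier G)" and g_closed: "g \<in> carrier G"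
begin

abbreviation H where "H \<equiv> generate G {g}"

lemma subgroup_H: "subgroup H G"
  using g_closed by (simp add: generate_is_subgroup)

lemma H_eq: "H = range (\<lambda>k::nat. g [^] k)"
  using generate_pow_on_finite_carrier[OF finite_carrier g_closed] by auto

lemma ord_g_pos: "0 < ord g"
  using ord_ge_1[OF finite_carrier g_closed] by simp

lemma pow_eq_pow_iff: "g [^] (i::nat) = g [^] (j::nat) \<longleftrightarrow> i mod ord g = j mod ord g"
proof -
  have "g [^] i = g [^] j \<longleftrightarrow> int (ord g) dvd int j - int i"
    using int_pow_eq[OF g_closed, of "int i" "int j"] by (simp add: int_pow_int)
  also have "\<dots> \<longleftrightarrow> i mod ord g = j mod ord g"
    by (metis mod_eq_dvd_iff of_nat_eq_iff of_nat_mod)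
  finally show ?thesis .
qed

definition dlog :: "'a \<Rightarrow> nat" where
  "dlog h = (SOME i. i < ord g \<and> g [^] i = h)"

lemma dlog: assumes "h \<in> H" shows "dlog h < ord g" "g [^] dlog h = h"
proof -
  obtain k :: nat where "h = g [^] k"
    using assms H_eq by auto
  then have "\<exists>i. i < ord g \<and> g [^] i = h"
    using ord_g_pos pow_eq_pow_iff by (intro exI[of _ "k mod ord g"]) auto
  then have "dlog h < ord g \<and> g [^] dlog h = h"
    unfolding dlog_def by (rule someI_ex)
  then show "dlog h < ord g" "g [^] dlog h = h" by auto
qed

lemma dlog_pow: "dlog (g [^] (k::nat)) = k mod ord g"
proof -
  have "g [^] k \<in> H"
    using H_eq by auto
  then show ?thesis
    using dlog pow_eq_pow_iff by (metis mod_less)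
qed

lemma dlog_mult:
  assumes "h \<in> H" "h' \<in> H"
  shows "dlog (h \<otimes> h') = (dlog h + dlog h') mod ord g"
proof -
  have "h \<otimes> h' = g [^] (dlog h + dlog h')"
    using assms dlog(2) g_closed by (metis nat_pow_mult)
  then show ?thesis by (simp add: dlog_pow)
qed

definition rep :: "'a set \<Rightarrow> 'a" where
  "rep C = (SOME t. t \<in> C)"

lemma rep:
  assumes "C \<in> rcosets H"
  shows "rep C \<in> C" "rep C \<in> carrier G" "H #> rep C = C"
proof -
  obtain a where a: "a \<in> carrier G" "C = H #> a"
    using assms unfolding RCOSETS_def by blast
  then have "a \<in> C"
    using rcos_self subgroup_H by blast
  then show "rep C \<in> C"
    unfolding rep_def by (rule someI)
  then show "rep C \<in> carrier G" "H #> rep C = C"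
    using a subgroup_H repr_independence subgroup.elemrcos_carrier[OF subgroup_H is_group]
    by auto
qed

lemma rcosets_subset_carrier: "C \<in> rcosets H \<Longrightarrow> C \<subseteq> carrier G"
  using subgroup.rcosets_carrier[OF subgroup_H is_group] .

lemma rcoset_mult_in_rcosets:
  assumes "C \<in> rcosets H" "x \<in> carrier G"
  shows "C #> x \<in> rcosets H"
proof -
  have "C #> x = H #> (rep C \<otimes> x)"
    using rep[OF assms(1)] assms(2) subgroup.subset[OF subgroup_H] by (metis coset_mult_assoc)
  then show ?thesis
    using rep(2)[OF assms(1)] assms(2) subgroup.subset[OF subgroup_H] by (simp add: rcosetsI)
qed

lemma bij_betw_rcosets_mult:
  assumes "x \<in> carrier G"
  shows "bij_betw (\<lambda>C. C #> x) (rcosets H) (rcosets H)"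
  by (rule bij_betwI[where g="\<lambda>C. C #> inv x"])
    (use assms in \<open>auto simp: rcoset_mult_in_rcosets coset_mult_assoc rcosets_subset_carrier
      coset_mult_one\<close>)

lemma funpow_rcoset_mult:
  assumes "C \<in> rcosets H" "x \<in> carrier G"
  shows "((\<lambda>C. C #> x) ^^ n) C = C #> x [^] (n::nat)"
proof (induction n)
  case 0
  then show ?case
    using assms by (simp add: coset_mult_one rcosets_subset_carrier)
next
  case (Suc n)
  then show ?case
    using assms by (simp add: coset_mult_assoc rcosets_subset_carrier)
qed

definition transfer_factor :: "'a set \<Rightarrow> 'a \<Rightarrow> 'a" where
  "transfer_factor C x = rep C \<otimes> x \<otimes> inv (rep (C #> x))"

lemma transfer_factor_in_H:
  assumes "C \<in> rcosets H" "x \<in> carrier G"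
  shows "transfer_factor C x \<in> H"
proof -
  have "rep C \<otimes> x \<in> C #> x"
    using rep(1)[OF assms(1)] unfolding r_coset_def by blast
  also have "C #> x = H #> rep (C #> x)"
    using rep(3)[OF rcoset_mult_in_rcosets[OF assms]] by simp
  finally show ?thesis
    unfolding transfer_factor_def
    using subgroup.rcos_module_imp[OF subgroup_H is_group] rep(2) rcoset_mult_in_rcosets assms
    by blast
qed

lemma transfer_factor_mult:
  assumes "C \<in> rcosets H" "x \<in> carrier G" "y \<in> carrier G"
  shows "transfer_factor C (x \<otimes> y) = transfer_factor C x \<otimes> transfer_factor (C #> x) y"
proof -
  have "C #> (x \<otimes> y) = C #> x #> y"
    using assms by (simp add: coset_mult_assoc rcosets_subset_carrier)
  moreover have "rep C \<in> carrier G" "rep (C #> x) \<in> carrier G" "rep (C #> x #> y) \<in> carrier G"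
    using assms rep(2) rcoset_mult_in_rcosets by blast+
  ultimately show ?thesis
    using assms unfolding transfer_factor_def by (simp add: m_assoc inv_mult_cancel_left)
qed

(* The transfer x |-> prod_C rep C x (rep (C x))^-1 into <g>, written additively via dlog. *)
definition transfer_log :: "'a \<Rightarrow> nat" where
  "transfer_log x = (\<Sum>C\<in>rcosets H. dlog (transfer_factor C x)) mod ord g"

lemma transfer_log_mult:
  assumes "x \<in> carrier G" "y \<in> carrier G"
  shows "transfer_log (x \<otimes> y) = (transfer_log x + transfer_log y) mod ord g"
proof -
  define f where "f z C = dlog (transfer_factor C z)" for z C
  have "(\<Sum>C\<in>rcosets H. f (x \<otimes> y) C) mod ord g
      = (\<Sum>C\<in>rcosets H. (f x C + f y (C #> x)) mod ord g) mod ord g"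
    unfolding f_def using assms
    by (auto simp: transfer_factor_mult dlog_mult transfer_factor_in_H rcoset_mult_in_rcosets
      intro!: sum.cong arg_cong[where f="\<lambda>z. z mod ord g"])
  also have "\<dots> = (\<Sum>C\<in>rcosets H. f x C + f y (C #> x)) mod ord g"
    by (simp add: mod_sum_eq)
  also have "(\<Sum>C\<in>rcosets H. f x C + f y (C #> x)) = (\<Sum>C\<in>rcosets H. f x C) + (\<Sum>C\<in>rcosets H. f y C)"
    using sum.reindex_bij_betw[OF bij_betw_rcosets_mult[OF assms(1)], of "f y"]
    by (simp add: sum.distrib)
  finally show ?thesis
    unfolding transfer_log_def f_def by (simp add: mod_add_eq)
qed

lemma transfer_factor_pow:
  assumes "C \<in> rcosets H" "x \<in> carrier G"
  shows "(\<Sum>k<(n::nat). dlog (transfer_factor (C #> x [^] k) x)) mod ord g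
    = dlog (transfer_factor C (x [^] n))"
proof (induction n)
  case 0
  have "transfer_factor C \<one> = \<one>"
    using assms rep(2) by (simp add: transfer_factor_def coset_mult_one rcosets_subset_carrier)
  then show ?case
    using dlog_pow[of 0] by simp
next
  case (Suc n)
  have "transfer_factor C (x [^] Suc n) = transfer_factor C (x [^] n) \<otimes> transfer_factor (C #> x [^] n) x"
    using transfer_factor_mult assms by simp
  then have "dlog (transfer_factor C (x [^] Suc n))
      = (dlog (transfer_factor C (x [^] n)) + dlog (transfer_factor (C #> x [^] n) x)) mod ord g"
    using dlog_mult transfer_factor_in_H rcoset_mult_in_rcosets assms by simp
  then show ?case
    using Suc.IH by (metis mod_add_left_eq sum.lessThan_Suc)
qed

lemma order_eq_ord_mult_index: "order G = ord g * card (rcosets H)"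
  using lagrange[OF subgroup_H] generate_pow_card[OF g_closed] by (simp add: mult.commute)

lemma odd_transfer_log_generator:
  assumes "even (ord g)" "odd (card (rcosets H))"
  shows "odd (transfer_log g)"
proof -
  have even_mod: "even (k mod ord g) = even k" for k
    using assms(1) by (simp add: dvd_mod_iff)
  have fin: "finite (rcosets H)"
    using finite_carrier rcosets_subset_carrier by (meson Pow_iff finite_Pow_iff finite_subset subsetI)
  have "even (\<Sum>C\<in>rcosets H. dlog (transfer_factor C g)) = even (card (rcosets H))"
  proof (rule even_sum_eq_even_card_by_cycles[OF fin bij_betw_rcosets_mult[OF g_closed]])
    fix C n assume C: "C \<in> rcosets H" and "0 < n" and cycle: "((\<lambda>C. C #> g) ^^ n) C = C"
    \<comment> \<open>The cycle through C contributes the conjugate rep C g^n (rep C)^-1 of g^n, lying in H.\<close>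
    have Cg: "C #> g [^] n = C"
      using cycle funpow_rcoset_mult[OF C g_closed] by simp
    have "even (\<Sum>k<n. dlog (transfer_factor (((\<lambda>C. C #> g) ^^ k) C) g))
        = even ((\<Sum>k<n. dlog (transfer_factor (C #> g [^] k) g)) mod ord g)"
      by (simp add: funpow_rcoset_mult[OF C g_closed] even_mod)
    also have "\<dots> = even (dlog (transfer_factor C (g [^] n)))"
      by (simp only: transfer_factor_pow[OF C g_closed])
    also have "transfer_factor C (g [^] n) = rep C \<otimes> g [^] n \<otimes> inv (rep C)"
      using Cg by (simp add: transfer_factor_def)
    also have "even (dlog (rep C \<otimes> g [^] n \<otimes> inv (rep C))) = even n"
    proof (rule even_exponent_of_conjugate_power[OF finite_carrier g_closed assms(1) rep(2)[OF C]])
      show "rep C \<otimes> g [^] n \<otimes> inv (rep C) = g [^] dlog (rep C \<otimes> g [^] n \<otimes> inv (rep C))"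
        using dlog(2) transfer_factor_in_H[OF C, of "g [^] n"] Cg g_closed
        by (simp add: transfer_factor_def)
    qed
    finally show "even (\<Sum>k<n. dlog (transfer_factor (((\<lambda>C. C #> g) ^^ k) C) g)) = even n" .
  qed
  then show ?thesis
    using assms(2) even_mod unfolding transfer_log_def by simp
qed

lemma obtain_cyclic_quotient:
  assumes "ord g = 2 ^ a" "0 < a" "odd (card (rcosets H))"
  obtains \<psi> where "cyclic_quotient G \<psi> (ord g) (card (rcosets H)) g"
proof -
  have "odd (transfer_log g)"
    using odd_transfer_log_generator assms by simp
  then have "coprime (transfer_log g) (ord g)" and "transfer_log g \<noteq> 0"
    using assms(1) by (auto intro!: Nat.gr0I)
  then obtain w v where w: "transfer_log g * w = ord g * v + 1"
    using bezout_nat[of "transfer_log g" "ord g"] by auto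
  have "1 < ord g"
    using assms(1,2) one_less_power[of "2::nat" a] by simp
  define \<psi> where "\<psi> x = transfer_log x * w mod ord g" for x
  have "cyclic_quotient G \<psi> (ord g) (card (rcosets H)) g"
  proof unfold_locales
    show "\<psi> x < ord g" for x
      using ord_g_pos by (simp add: \<psi>_def)
    show "\<psi> (x \<otimes> y) = (\<psi> x + \<psi> y) mod ord g" if "x \<in> carrier G" "y \<in> carrier G" for x y
      using that by (simp add: \<psi>_def transfer_log_mult mod_mult_left_eq distrib_right mod_add_eq)
    show "\<psi> g = 1"
      using w \<open>1 < ord g\<close> by (simp add: \<psi>_def mod_Suc)
    show "even (ord g)"
      using assms(1,2) by simp
    show "order G = ord g * card (rcosets H)"
      by (rule order_eq_ord_mult_index)
  qed (use finite_carrier g_closed assms(3) in auto)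
  then show ?thesis
    by (rule that)
qed

end

lemma (in group) obtain_cyclic_sylow_generator:
  fixes p :: nat
  assumes "finite (carrier G)" "Factorial_Ring.prime p"
    and cyclic: "\<forall>P. sylow_subgroup G p P \<longrightarrow> card P > 1 \<and> cyclic_group (subgroup_generated G P)"
  obtains g where "g \<in> carrier G" "ord g = p ^ multiplicity p (order G)" "0 < multiplicity p (order G)"
proof -
  define a where "a = multiplicity p (order G)"
  have "order G = p ^ a * (order G div p ^ a)"
    unfolding a_def by (simp add: multiplicity_dvd)
  then obtain P where P: "subgroup P G" "card P = p ^ a"
    using sylow_thm[OF assms(2) is_group _ assms(1)] by blast
  then have "sylow_subgroup G p P"
    by (simp add: sylow_subgroup_def a_def)
  then have "1 < card P" "cyclic_group (subgroup_generated G P)"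
    using cyclic by auto
  interpret P: group "subgroup_generated G P"
    by (rule group_subgroup_generated)
  have carrier_P: "carrier (subgroup_generated G P) = P"
    by (rule subgroup.carrier_subgroup_generated_subgroup[OF P(1)])
  obtain g where g: "g \<in> P" "P = range (\<lambda>k::int. g [^]\<^bsub>subgroup_generated G P\<^esub> k)"
    using P.cyclic_group \<open>cyclic_group (subgroup_generated G P)\<close> carrier_P by auto
  have g_closed: "g \<in> carrier G"
    using g(1) subgroup.subset[OF P(1)] by blast
  have "P = range (\<lambda>k::int. g [^] k)"
    using g int_pow_subgroup_generated[of g P] carrier_P by auto
  then have "generate G {g} = P"
    using generate_pow[OF g_closed] by auto
  then have "ord g = p ^ a"
    using generate_pow_card[OF g_closed] P(2) by simp
  moreover have "0 < a"
    using \<open>1 < card P\<close> P(2) by (cases a) auto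
  ultimately show ?thesis
    using that g_closed a_def by blast
qed

theorem theorem5p2:
  fixes G :: "('a, 'b) monoid_scheme" and n :: nat
  assumes "group G"
    and "finite (carrier G)"
    and "order G = n"
    and "\<forall>P. sylow_subgroup G 2 P \<longrightarrow> card P > 1 \<and> cyclic_group (subgroup_generated G P)"
  shows "(\<forall>k. odd k \<longrightarrow> \<not> (\<exists>P. cayley_kplex G k P))
    \<and> (\<exists>Q. cayley_2partition G Q)
    \<and> (\<forall>k. even k \<and> k \<le> n \<longrightarrow> (\<exists>P. cayley_kplex G k P))"
proof -
  interpret group G by fact
  define a where "a = multiplicity 2 n"
  obtain g where g: "g \<in> carrier G" "ord g = 2 ^ a" "0 < a"
    using obtain_cyclic_sylow_generator[OF assms(2) two_is_prime_nat assms(4)] assms(3)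
    unfolding a_def by blast
  interpret cyclic_transfer G g
    using g(1) assms(2) by unfold_locales
  have "card (rcosets\<^bsub>G\<^esub> H) = n div 2 ^ a"
    using order_eq_ord_mult_index g(2) assms(3) by auto
  moreover have "odd (n div 2 ^ a)"
    using multiplicity_decompose[of n 2] assms(2,3) order_gt_0_iff_finite by (simp add: a_def)
  ultimately obtain \<psi> where "cyclic_quotient G \<psi> (ord g) (card (rcosets\<^bsub>G\<^esub> H)) g"
    using obtain_cyclic_quotient g(2,3) by metis
  then interpret cyclic_quotient G \<psi> "ord g" "card (rcosets\<^bsub>G\<^esub> H)" g .
  show ?thesis
    using even_if_cayley_kplex cayley_2partition_twoplexes
      cayley_kplex_if_2partition[OF cayley_2partition_twoplexes assms(2)] assms(3)
    by blast
qed

end
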